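(* Let $h_1,\dots,h_{n-k}$ be the generators of a valid rate-$k/n$ quantum convolutional code and suppose its memory commutativity matrix $\Omega$ has full rank over $\mathbb{F}_2$. Let $m=\dim(\Omega)-\frac12\mathrm{rank}(\Omega)$, let $g_{i,j}$ be $m$-qubit Pauli operators with $g_{i,j}\odot g_{i',j'}=[\Omega]_{(i,j),(i',j')}$, and let $U$ be any Clifford unitary on $m+n$ qubits implementing the encoding transformation with these memory operators. Then $U$ is non-catastrophic.
   Context: Pauli operators are considered up to phase; $A\odot B\in\{0,1\}$ is $1$ iff $A,B$ anticommute, additive mod 2 over tensor factors. The weight of a Pauli operator is its number of non-identity tensor factors. A rate-$k/n$ quantum convolutional code is given by $n-k$ generators $h_i=(h_{i,1}|\cdots|h_{i,l_i})$ of $n$-qubit Pauli operators (frames of $n$ qubits) and all their frame shifts; it is valid if all these pairwise commute, i.e. $\sum_r h_{i,r+t}\odot h_{i',r}=0$ for all $i,i',t$ (with $h_{i,j}=I^{\otimes n}$ outside $1\le j\le l_i$). Encoding transformation: a Clifford unitary $U$ acting on $m$ memory, $n-k$ ancilla and $k$ information qubits and outputting $n$ physical and $m$ memory qubits implements it if, for each $1\le i\le n-k$ and $0\le j\le l_i-1$, $U$ maps $g_{i,j}\otimes A_{i,j}\otimes I^{\otimes k}$ to $h_{i,j+1}\otimes g_{i,j+1}$ (up to phase), where $g_{i,0}=g_{i,l_i}=I^{\otimes m}$, $A_{i,0}=Z_i$ (Pauli $Z$ on the $i$-th ancilla), $A_{i,j}=I^{\otimes(n-k)}$ for $j\ge1$,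 and $g_{i,j}$ ($1\le j\le l_i-1$) are $m$-qubit Pauli operators. Memory commutativity matrix $\Omega$: the symmetric binary matrix indexed by $(i,j)$, $1\le i\le n-k$, $1\le j\le l_i-1$, with entries $g_{i,j}\odot g_{i',j'}$, which are forced by consistency of commutation relations and equal, for $j\ge j'$, $\sum_{r\ge1}h_{i,j+r}\odot h_{i',j'+r}$; $\dim(\Omega)$ is its number of rows. State diagram of $U$: a directed multigraph whose vertices are the $m$-qubit Pauli operators (memory states); there is an edge from $M$ to $M'$ labeled $(L,P)$ whenever $U$ maps $M\otimes S^z\otimes L$ to $P\otimes M'$ for some $S^z\in\{I,Z\}^{\otimes(n-k)}$ on the ancillas, $k$-qubit Pauli $L$ on the information qubits and $n$-qubit Pauli $P$ on the physical qubits. The physical (logical) weight of the edge is the weight of $P$ (of $L$). $U$ is catastrophic if its state diagram has a cycle all of whose edges have zero physical weight and at least one edge has nonzero logical weight; otherwise it is non-catastrophic. *)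

theory Defs
  imports "HOL-Library.Z2" "Jordan_Normal_Form.DL_Rank"
begin

text \<open>A Pauli operator up to phase on qubits 0,1,2,... is a function giving, for each qubit,
  its (x,z) bits: (F,F)=I, (T,F)=X, (T,T)=Y, (F,T)=Z.\<close>

type_synonym pauli = "nat \<Rightarrow> bool \<times> bool"

definition pI :: pauli where "pI = (\<lambda>_. (False, False))"

definition is_pauli :: "nat \<Rightarrow> pauli \<Rightarrow> bool" where
  "is_pauli N P \<longleftrightarrow> (\<forall>i. N \<le> i \<longrightarrow> P i = (False, False))"

definition pmul :: "pauli \<Rightarrow> pauli \<Rightarrow> pauli" where
  "pmul P Q = (\<lambda>i. (fst (P i) \<noteq> fst (Q i), snd (P i) \<noteq> snd (Q i)))"

text \<open>Commutation indicator A \<odot> B (0 = commute, 1 = anticommute) for N-qubit operators: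
  parity of the number of tensor factors that anticommute.\<close>
definition sp :: "nat \<Rightarrow> pauli \<Rightarrow> pauli \<Rightarrow> nat" where
  "sp N P Q = card {i. i < N \<and> ((fst (P i) \<and> snd (Q i)) \<noteq> (snd (P i) \<and> fst (Q i)))} mod 2"

definition weight :: "nat \<Rightarrow> pauli \<Rightarrow> nat" where
  "weight N P = card {i. i < N \<and> P i \<noteq> (False, False)}"

definition tensor :: "nat \<Rightarrow> pauli \<Rightarrow> pauli \<Rightarrow> pauli" where
  "tensor N A B = (\<lambda>i. if i < N then A i else B (i - N))"

definition Zop :: "nat \<Rightarrow> pauli" where
  "Zop a = (\<lambda>i. if i = a then (False, True) else (False, False))"

definition is_Zstring :: "nat \<Rightarrow> pauli \<Rightarrow> bool" where
  "is_Zstring N S \<longleftrightarrow> is_pauli N S \<and> (\<forall>i. \<not> fst (S i))"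

text \<open>The action (up to phase) of a Clifford unitary on N qubits: a bijection of the N-qubit
  Pauli operators (mod phase) that respects products and commutation relations
  (a symplectic automorphism of F_2^{2N}); every such map comes from a Clifford unitary
  and vice versa.\<close>
definition clifford :: "nat \<Rightarrow> (pauli \<Rightarrow> pauli) \<Rightarrow> bool" where
  "clifford N U \<longleftrightarrow>
     bij_betw U {P. is_pauli N P} {P. is_pauli N P} \<and>
     (\<forall>P Q. is_pauli N P \<longrightarrow> is_pauli N Q \<longrightarrow> U (pmul P Q) = pmul (U P) (U Q)) \<and>
     (\<forall>P Q. is_pauli N P \<longrightarrow> is_pauli N Q \<longrightarrow> sp N (U P) (U Q) = sp N P Q)"

text \<open>Generators are indexed i = 1..n-k, frames j = 1..l i; outside this range h_{i,j} = I.\<close>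
definition hext :: "(nat \<Rightarrow> nat \<Rightarrow> pauli) \<Rightarrow> (nat \<Rightarrow> nat) \<Rightarrow> nat \<Rightarrow> nat \<Rightarrow> pauli" where
  "hext h l i j = (if 1 \<le> j \<and> j \<le> l i then h i j else pI)"

definition valid_qcc :: "nat \<Rightarrow> nat \<Rightarrow> (nat \<Rightarrow> nat \<Rightarrow> pauli) \<Rightarrow> (nat \<Rightarrow> nat) \<Rightarrow> bool" where
  "valid_qcc n k h l \<longleftrightarrow>
     k \<le> n \<and>
     (\<forall>i\<in>{1..n-k}. 1 \<le> l i \<and> (\<forall>j\<in>{1..l i}. is_pauli n (h i j))) \<and>
     (\<forall>i\<in>{1..n-k}. \<forall>i'\<in>{1..n-k}. \<forall>t::nat.
        even (\<Sum>r\<in>{1..l i'}. sp n (hext h l i (r + t)) (hext h l i' r)))"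

definition omega_idx :: "nat \<Rightarrow> (nat \<Rightarrow> nat) \<Rightarrow> (nat \<times> nat) list" where
  "omega_idx nk l = concat (map (\<lambda>i. map (\<lambda>j. (i, j)) [1..<l i]) [1..<nk + 1])"

definition omega_entry :: "nat \<Rightarrow> (nat \<Rightarrow> nat \<Rightarrow> pauli) \<Rightarrow> (nat \<Rightarrow> nat) \<Rightarrow>
    nat \<times> nat \<Rightarrow> nat \<times> nat \<Rightarrow> bit" where
  "omega_entry n h l a b =
     (let (i, j) = a; (i', j') = b in
      if j' \<le> j then of_nat (\<Sum>r\<in>{1..l i}. sp n (hext h l i (j + r)) (hext h l i' (j' + r)))
      else of_nat (\<Sum>r\<in>{1..l i'}. sp n (hext h l i' (j' + r)) (hext h l i (j + r))))"

definition omega_dim :: "nat \<Rightarrow> (nat \<Rightarrow> nat) \<Rightarrow> nat" where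
  "omega_dim nk l = length (omega_idx nk l)"

definition Omega :: "nat \<Rightarrow> nat \<Rightarrow> (nat \<Rightarrow> nat \<Rightarrow> pauli) \<Rightarrow> (nat \<Rightarrow> nat) \<Rightarrow> bit mat" where
  "Omega n k h l =
     (let ix = omega_idx (n - k) l; D = length ix in
      mat D D (\<lambda>(a, b). omega_entry n h l (ix ! a) (ix ! b)))"

definition Omega_rank :: "nat \<Rightarrow> nat \<Rightarrow> (nat \<Rightarrow> nat \<Rightarrow> pauli) \<Rightarrow> (nat \<Rightarrow> nat) \<Rightarrow> nat" where
  "Omega_rank n k h l = vec_space.rank (omega_dim (n - k) l) (Omega n k h l)"

definition gext :: "(nat \<Rightarrow> nat \<Rightarrow> pauli) \<Rightarrow> (nat \<Rightarrow> nat) \<Rightarrow> nat \<Rightarrow> nat \<Rightarrow> pauli" where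
  "gext g l i j = (if 1 \<le> j \<and> j < l i then g i j else pI)"

text \<open>U acts on m memory, n-k ancilla and k information qubits (in this order) and outputs
  n physical and m memory qubits (in this order).\<close>
definition implements_encoding :: "nat \<Rightarrow> nat \<Rightarrow> nat \<Rightarrow> (nat \<Rightarrow> nat \<Rightarrow> pauli) \<Rightarrow> (nat \<Rightarrow> nat)
    \<Rightarrow> (nat \<Rightarrow> nat \<Rightarrow> pauli) \<Rightarrow> (pauli \<Rightarrow> pauli) \<Rightarrow> bool" where
  "implements_encoding n k m h l g U \<longleftrightarrow>
     clifford (m + n) U \<and>
     (\<forall>i\<in>{1..n-k}. \<forall>j<l i.
        U (tensor m (gext g l i j) (tensor (n - k) (if j = 0 then Zop (i - 1) else pI) pI))
          = tensor n (hext h l i (j + 1)) (gext g l i (j + 1)))"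

definition sd_edge :: "nat \<Rightarrow> nat \<Rightarrow> nat \<Rightarrow> (pauli \<Rightarrow> pauli) \<Rightarrow> pauli \<Rightarrow> pauli \<Rightarrow> pauli \<Rightarrow> pauli \<Rightarrow> bool" where
  "sd_edge n k m U M M' L P \<longleftrightarrow>
     is_pauli m M \<and> is_pauli m M' \<and> is_pauli k L \<and> is_pauli n P \<and>
     (\<exists>S. is_Zstring (n - k) S \<and> U (tensor m M (tensor (n - k) S L)) = tensor n P M')"

definition catastrophic :: "nat \<Rightarrow> nat \<Rightarrow> nat \<Rightarrow> (pauli \<Rightarrow> pauli) \<Rightarrow> bool" where
  "catastrophic n k m U \<longleftrightarrow>
     (\<exists>p::nat. \<exists>M L P :: nat \<Rightarrow> pauli. 0 < p \<and> M p = M 0 \<and>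
        (\<forall>t<p. sd_edge n k m U (M t) (M (Suc t)) (L t) (P t) \<and> weight n (P t) = 0) \<and>
        (\<exists>t<p. weight k (L t) \<noteq> 0))"

end

theory Submission
  imports Defs
begin

text \<open>Follow a cycle of the state diagram all of whose physical outputs are trivial. Since U
  preserves commutation, the memory states M_t, M_(t+1) of each edge satisfy
  M_t \<odot> g_(i,j) = M_(t+1) \<odot> g_(i,j+1); as g_(i,0) = I and the walk is closed, every memory
  state on the cycle commutes with every g_(i,j). Because \<Omega> is nonsingular, a memory state
  M \<noteq> I together with the g_(i,j) would be dim(\<Omega>) + 1 \<ge> 2m independent m-qubit Paulis, hence
  a generating set, and M would commute with every Pauli. So all memory states on the cycle are
  I, and then injectivity of U forces every logical input to be I.\<close>

lemma odd_card_sym_diff: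
  assumes "finite A" "finite B"
  shows "odd (card (sym_diff A B)) \<longleftrightarrow> odd (card A) \<noteq> odd (card B)"
proof -
  have "card A = card (A - B) + card (A \<inter> B)" "card B = card (B - A) + card (A \<inter> B)"
    "card (sym_diff A B) = card (A - B) + card (B - A)"
    using assms by (subst card_Un_disjoint[symmetric]; auto intro: arg_cong[where f = card])+
  then show ?thesis by auto
qed

lemma card_less_add:
  fixes N1 N2 :: nat
  shows "card {i. i < N1 + N2 \<and> P i} = card {i. i < N1 \<and> P i} + card {i. i < N2 \<and> P (N1 + i)}"
proof -
  have "{i. i < N1 + N2 \<and> P i} = {i. i < N1 \<and> P i} \<union> (+) N1 ` {i. i < N2 \<and> P (N1 + i)}"
    (is "?L = ?R")
  proof
    show "?L \<subseteq> ?R"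
    proof
      fix x assume x: "x \<in> ?L"
      show "x \<in> ?R"
      proof (cases "x < N1")
        case False
        then show ?thesis
          using x by (intro UnI2 image_eqI[of x "(+) N1" "x - N1"]) auto
      qed (use x in simp)
    qed
  qed auto
  then show ?thesis
    by (simp only:) (subst card_Un_disjoint; auto simp: card_image)
qed

lemma sp_commute: "sp N P Q = sp N Q P"
  unfolding sp_def by (intro arg_cong[where f = "\<lambda>S. card S mod 2"]) auto

lemma sp_self [simp]: "sp N P P = 0"
  unfolding sp_def by (simp add: conj_commute)

lemma sp_pI_right [simp]: "sp N P pI = 0"
  unfolding sp_def pI_def by simp

lemma sp_pI_left [simp]: "sp N pI P = 0"
  unfolding sp_def pI_def by simp

lemma sp_less_2: "sp N P Q < 2"
  unfolding sp_def by simp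

lemma sp_pmul_right: "sp N P (pmul Q R) = (sp N P Q + sp N P R) mod 2"
proof -
  let ?anti = "\<lambda>Q i. (fst (P i) \<and> snd (Q i)) \<noteq> (snd (P i) \<and> fst (Q i))"
  define A where "A = {i. i < N \<and> ?anti Q i}"
  define B where "B = {i. i < N \<and> ?anti R i}"
  have "{i. i < N \<and> ?anti (pmul Q R) i} = sym_diff A B"
    unfolding pmul_def A_def B_def by auto
  then have "sp N P (pmul Q R) = card (sym_diff A B) mod 2"
    unfolding sp_def by simp
  also have "\<dots> = (card A + card B) mod 2"
  proof -
    have "finite A" "finite B"
      by (simp_all add: A_def B_def)
    then have "odd (card (sym_diff A B)) \<longleftrightarrow> odd (card A + card B)"
      by (auto simp: odd_card_sym_diff)
    then show ?thesis
      by (auto simp: mod2_eq_if)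
  qed
  also have "\<dots> = (sp N P Q + sp N P R) mod 2"
    unfolding sp_def A_def B_def by (simp add: mod_add_eq)
  finally show ?thesis .
qed

lemma sp_tensor:
  "sp (N1 + N2) (tensor N1 A B) (tensor N1 C D) = (sp N1 A C + sp N2 B D) mod 2"
  unfolding sp_def card_less_add by (simp add: tensor_def mod_add_eq cong: conj_cong)

lemma sp_Z_type:
  assumes "\<forall>i. \<not> fst (S i)" "\<forall>i. \<not> fst (T i)"
  shows "sp N S T = 0"
  unfolding sp_def using assms by simp

lemma sp_nondegenerate:
  assumes M: "is_pauli N M" and orth: "\<And>P. is_pauli N P \<Longrightarrow> sp N M P = 0"
  shows "M = pI"
proof (rule ccontr)
  assume "M \<noteq> pI"
  then obtain q where q: "M q \<noteq> (False, False)"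
    unfolding pI_def by auto
  with M have "q < N"
    unfolding is_pauli_def by (meson not_le)
  \<comment> \<open>a single-qubit X or Z on qubit q anticommutes with M\<close>
  define E where "E = (\<lambda>i. if i = q then (snd (M q), \<not> snd (M q)) else (False, False))"
  have "is_pauli N E"
    using \<open>q < N\<close> unfolding is_pauli_def E_def by auto
  moreover have "{i. i < N \<and> ((fst (M i) \<and> snd (E i)) \<noteq> (snd (M i) \<and> fst (E i)))} = {q}"
    using q \<open>q < N\<close> unfolding E_def by (cases "M q") auto
  ultimately show False
    using orth unfolding sp_def by fastforce
qed

definition pprod :: "('i \<Rightarrow> pauli) \<Rightarrow> 'i set \<Rightarrow> pauli" where
  "pprod f C = (\<lambda>q. (odd (card {c \<in> C. fst (f c q)}), odd (card {c \<in> C. snd (f c q)})))"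

definition pauli_independent :: "('i \<Rightarrow> pauli) \<Rightarrow> 'i set \<Rightarrow> bool" where
  "pauli_independent f I \<longleftrightarrow> (\<forall>C \<subseteq> I. pprod f C = pI \<longrightarrow> C = {})"

lemma pmul_self [simp]: "pmul P P = pI"
  unfolding pmul_def pI_def by simp

lemma pmul_eq_pI_iff: "pmul P Q = pI \<longleftrightarrow> P = Q"
  unfolding pmul_def pI_def fun_eq_iff by (auto simp: prod_eq_iff)

lemma pprod_empty [simp]: "pprod f {} = pI"
  unfolding pprod_def pI_def by simp

lemma pprod_singleton: "pprod f {c} = f c"
  unfolding pprod_def by (simp add: fun_eq_iff Collect_conj_eq Int_insert_left prod_eq_iff)

lemma pprod_cong: "(\<And>c. c \<in> C \<Longrightarrow> f c = f' c) \<Longrightarrow> pprod f C = pprod f' C"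
  unfolding pprod_def by (metis (mono_tags, lifting) Collect_cong)

lemma pprod_sym_diff:
  assumes "finite A" "finite B"
  shows "pprod f (sym_diff A B) = pmul (pprod f A) (pprod f B)"
proof -
  have "{c \<in> sym_diff A B. Q c} = sym_diff {c \<in> A. Q c} {c \<in> B. Q c}" for Q
    by auto
  then show ?thesis
    unfolding pprod_def pmul_def using assms by (simp add: odd_card_sym_diff)
qed

lemma pprod_insert:
  assumes "finite C" "c \<notin> C"
  shows "pprod f (insert c C) = pmul (f c) (pprod f C)"
proof -
  have "insert c C = sym_diff {c} C"
    using assms(2) by auto
  then show ?thesis
    using pprod_sym_diff[of "{c}" C f] assms(1) by (simp add: pprod_singleton)
qed

lemma is_pauli_pprod:
  assumes "\<And>c. c \<in> C \<Longrightarrow> is_pauli N (f c)"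
  shows "is_pauli N (pprod f C)"
  unfolding is_pauli_def
proof (intro allI impI)
  fix i assume "N \<le> i"
  then have "{c \<in> C. fst (f c i)} = {}" "{c \<in> C. snd (f c i)} = {}"
    using assms unfolding is_pauli_def by auto
  then show "pprod f C i = (False, False)"
    unfolding pprod_def by (simp only:) simp
qed

lemma sp_pprod_right: "finite C \<Longrightarrow> sp N P (pprod f C) = (\<Sum>c\<in>C. sp N P (f c)) mod 2"
proof (induction C rule: finite_induct)
  case (insert c C)
  have "sp N P (pprod f (insert c C)) = (sp N P (f c) + sp N P (pprod f C)) mod 2"
    by (simp only: pprod_insert[OF insert(1,2)] sp_pmul_right)
  also have "\<dots> = (sp N P (f c) + (\<Sum>c\<in>C. sp N P (f c))) mod 2"
    by (simp only: insert.IH mod_add_right_eq)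
  also have "\<dots> = (\<Sum>c\<in>insert c C. sp N P (f c)) mod 2"
    by (simp only: sum.insert[OF insert(1,2)])
  finally show ?case .
qed simp

lemma finite_card_paulis: "finite {P. is_pauli N P} \<and> card {P. is_pauli N P} \<le> 4 ^ N"
proof -
  let ?restr = "\<lambda>P. restrict P {..<N}"
  have inj: "inj_on ?restr {P. is_pauli N P}"
  proof (rule inj_onI, rule ext)
    fix P Q i
    assume "P \<in> {P. is_pauli N P}" "Q \<in> {P. is_pauli N P}" "?restr P = ?restr Q"
    then show "P i = Q i"
      unfolding is_pauli_def by (cases "i < N") (auto dest: fun_cong[of _ _ i])
  qed
  have into: "?restr ` {P. is_pauli N P} \<subseteq> Pi\<^sub>E {..<N} (\<lambda>_. UNIV)"
    by (simp add: image_subset_iff)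
  have "card (Pi\<^sub>E {..<N} (\<lambda>_. UNIV :: (bool \<times> bool) set)) = 4 ^ N"
    by (simp add: card_PiE UNIV_Times_UNIV[symmetric] card_cartesian_product del: UNIV_Times_UNIV)
  then show ?thesis
    using inj_on_finite[OF inj into] card_inj_on_le[OF inj into] by (simp add: finite_PiE)
qed

lemma independent_family_spans:
  assumes fin: "finite I" and pauli: "\<And>c. c \<in> I \<Longrightarrow> is_pauli N (f c)"
    and card: "2 * N \<le> card I" and indep: "pauli_independent f I"
    and P: "is_pauli N P"
  shows "\<exists>C \<subseteq> I. pprod f C = P"
proof -
  have "inj_on (pprod f) (Pow I)"
  proof (rule inj_onI)
    fix A B assume A: "A \<in> Pow I" and B: "B \<in> Pow I" and eq: "pprod f A = pprod f B"
    then have "pprod f (sym_diff A B) = pI"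
      using fin by (simp add: pprod_sym_diff finite_subset)
    moreover have "sym_diff A B \<subseteq> I"
      using A B by blast
    ultimately have "sym_diff A B = {}"
      using indep unfolding pauli_independent_def by blast
    then show "A = B"
      by blast
  qed
  then have "card (pprod f ` Pow I) = 2 ^ card I"
    by (simp add: card_image card_Pow fin)
  moreover have "(4::nat) ^ N \<le> 2 ^ card I"
  proof -
    have "(4::nat) ^ N = 2 ^ (2 * N)"
      by (simp add: power_mult)
    also have "\<dots> \<le> 2 ^ card I"
      using card by (rule power_increasing) simp
    finally show ?thesis .
  qed
  moreover have "pprod f ` Pow I \<subseteq> {P. is_pauli N P}"
    using pauli by (auto intro: is_pauli_pprod)
  ultimately have "pprod f ` Pow I = {P. is_pauli N P}"
    using finite_card_paulis[of N] by (intro card_seteq) auto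
  then have "P \<in> pprod f ` Pow I"
    using P by simp
  then show ?thesis
    by blast
qed

lemma mult_mat_vec_indicator:
  fixes A :: "'a :: semiring_1 mat"
  assumes "A \<in> carrier_mat R D" "C \<subseteq> {..<D}" "b < R"
  shows "(A *\<^sub>v vec D (\<lambda>c. if c \<in> C then 1 else 0)) $ b = (\<Sum>c\<in>C. A $$ (b, c))"
proof -
  let ?w = "vec D (\<lambda>c. if c \<in> C then 1 else 0)"
  have "(A *\<^sub>v ?w) $ b = row A b \<bullet> ?w"
    using assms by simp
  also have "\<dots> = (\<Sum>c\<in>{0..<D}. if c \<in> C then A $$ (b, c) else 0)"
    unfolding scalar_prod_def using assms by (intro sum.cong) auto
  also have "\<dots> = (\<Sum>c\<in>C. A $$ (b, c))"
    using assms(2) by (simp add: sum.inter_restrict[symmetric] Int_absorb1 atLeast0LessThan)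
  finally show ?thesis .
qed

lemma full_rank_gram_orthogonal_subproduct_empty:
  fixes A :: "bit mat"
  assumes A: "A \<in> carrier_mat D D" and rank: "vec_space.rank D A = D"
    and gram: "\<And>b c. b < D \<Longrightarrow> c < D \<Longrightarrow> A $$ (b, c) = of_nat (sp N (f b) (f c))"
    and C: "C \<subseteq> {..<D}" and orth: "\<And>b. b < D \<Longrightarrow> sp N (f b) (pprod f C) = 0"
  shows "C = {}"
proof -
  define v where "v = vec D (\<lambda>c. if c \<in> C then 1 else (0::bit))"
  have "A *\<^sub>v v = 0\<^sub>v D"
  proof (rule eq_vecI)
    fix b assume "b < dim_vec (0\<^sub>v D)"
    then have b: "b < D" by simp
    have "(A *\<^sub>v v) $ b = (\<Sum>c\<in>C. A $$ (b, c))"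
      unfolding v_def using A C b by (rule mult_mat_vec_indicator)
    also have "\<dots> = of_nat (\<Sum>c\<in>C. sp N (f b) (f c))"
      using C b by (simp add: gram subset_iff)
    also have "\<dots> = 0"
    proof -
      have "finite C"
        using C finite_subset by blast
      then have "even (\<Sum>c\<in>C. sp N (f b) (f c))"
        using orth[OF b] by (simp add: sp_pprod_right even_iff_mod_2_eq_zero)
      then show ?thesis
        by (auto simp del: of_nat_sum)
    qed
    finally show "(A *\<^sub>v v) $ b = 0\<^sub>v D $ b"
      using b by simp
  qed (use A in simp)
  moreover have "det A \<noteq> 0"
    using vec_space.det_rank_iff[OF A] rank by simp
  moreover have "v \<in> carrier_vec D"
    by (simp add: v_def)
  ultimately have "v = 0\<^sub>v D"
    using det_0_iff_vec_prod_zero_field[OF A] by blast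
  then have "v $ c = 0" if "c < D" for c
    using that by simp
  then show "C = {}"
    using C by (fastforce simp: v_def)
qed

lemma full_rank_gram_extend_independent:
  fixes A :: "bit mat"
  assumes A: "A \<in> carrier_mat D D" and rank: "vec_space.rank D A = D"
    and gram: "\<And>b c. b < D \<Longrightarrow> c < D \<Longrightarrow> A $$ (b, c) = of_nat (sp N (f b) (f c))"
    and M: "M \<noteq> pI" and comm: "\<And>c. c < D \<Longrightarrow> sp N M (f c) = 0"
  shows "pauli_independent (f(D := M)) {..<Suc D}"
  unfolding pauli_independent_def
proof (intro allI impI)
  fix C assume C: "C \<subseteq> {..<Suc D}" and prod: "pprod (f(D := M)) C = pI"
  define C' where "C' = C - {D}"
  have C': "C' \<subseteq> {..<D}" "finite C'" "D \<notin> C'"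
    using C unfolding C'_def by (auto simp: finite_subset)
  have agree: "pprod (f(D := M)) C' = pprod f C'"
    by (rule pprod_cong) (simp add: C'_def)
  have prod_rest: "pprod f C' = (if D \<in> C then M else pI)"
  proof (cases "D \<in> C")
    case True
    then have "C = insert D C'"
      unfolding C'_def by auto
    then have "pmul M (pprod f C') = pI"
      using prod agree pprod_insert[OF C'(2,3), of "f(D := M)"] by simp
    then show ?thesis
      using True by (simp add: pmul_eq_pI_iff)
  next
    case False
    then show ?thesis
      using prod agree unfolding C'_def by simp
  qed
  then have "sp N (f b) (pprod f C') = 0" if "b < D" for b
    using comm[OF that] by (simp add: sp_commute)
  then have "C' = {}"
    using full_rank_gram_orthogonal_subproduct_empty[OF A rank gram C'(1)] by blast
  then have "D \<notin> C"
    using prod_rest M by (auto split: if_splits)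
  then show "C = {}"
    using \<open>C' = {}\<close> unfolding C'_def by auto
qed

text \<open>Only 2N \<le> D + 1 is assumed: adjoining M gives D + 1 independent Paulis, so the parity
  of D never enters.\<close>

lemma full_rank_gram_commutant_trivial:
  fixes A :: "bit mat"
  assumes A: "A \<in> carrier_mat D D" and rank: "vec_space.rank D A = D"
    and gram: "\<And>b c. b < D \<Longrightarrow> c < D \<Longrightarrow> A $$ (b, c) = of_nat (sp N (f b) (f c))"
    and pauli: "\<And>c. c < D \<Longrightarrow> is_pauli N (f c)" and dim: "2 * N \<le> D + 1"
    and M: "is_pauli N M" and comm: "\<And>c. c < D \<Longrightarrow> sp N M (f c) = 0"
  shows "M = pI"
proof (rule ccontr)
  assume "M \<noteq> pI"
  let ?f = "f(D := M)"
  have pauli': "is_pauli N (?f c)" if "c \<in> {..<Suc D}" for c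
    using that M pauli by (cases "c = D") auto
  note indep = full_rank_gram_extend_independent[OF A rank gram \<open>M \<noteq> pI\<close> comm]
  have "sp N M Q = 0" if Q: "is_pauli N Q" for Q
  proof -
    obtain C where C: "C \<subseteq> {..<Suc D}" "pprod ?f C = Q"
      using independent_family_spans[OF _ pauli' _ indep Q] dim by auto
    have "sp N M (?f c) = 0" if "c \<in> C" for c
      using that C(1) comm by (cases "c = D") auto
    then show ?thesis
      using C sp_pprod_right[of C N M ?f] finite_subset by auto
  qed
  then have "M = pI"
    by (rule sp_nondegenerate[OF M])
  with \<open>M \<noteq> pI\<close> show False ..
qed

lemma is_pauli_pI [simp]: "is_pauli N pI"
  unfolding is_pauli_def pI_def by simp

lemma is_pauli_tensor: "is_pauli N1 A \<Longrightarrow> is_pauli N2 B \<Longrightarrow> is_pauli (N1 + N2) (tensor N1 A B)"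
  unfolding is_pauli_def tensor_def by auto

lemma is_pauli_Zop: "a < N \<Longrightarrow> is_pauli N (Zop a)"
  unfolding is_pauli_def Zop_def by auto

lemma tensor_pI [simp]: "tensor N pI pI = pI"
  unfolding tensor_def pI_def by simp

lemma tensor_eq_pI_right: "tensor N A B = pI \<Longrightarrow> B = pI"
  unfolding tensor_def pI_def fun_eq_iff by (metis add_diff_cancel_left' not_add_less1)

lemma weight_eq_0_iff: "is_pauli N P \<Longrightarrow> weight N P = 0 \<longleftrightarrow> P = pI"
  unfolding weight_def is_pauli_def pI_def fun_eq_iff by (auto simp: not_le) (metis linorder_not_less)

lemma clifford_pI: "clifford N U \<Longrightarrow> U pI = pI"
  unfolding clifford_def by (metis is_pauli_pI pmul_self)

lemma clifford_eq_pI_imp_eq_pI: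
  assumes "clifford N U" "is_pauli N P" "U P = pI"
  shows "P = pI"
proof -
  have "inj_on U {P. is_pauli N P}"
    using assms(1) unfolding clifford_def by (blast dest: bij_betw_imp_inj_on)
  moreover have "U P = U pI"
    using assms by (simp add: clifford_pI)
  ultimately show ?thesis
    using assms(2) by (auto dest: inj_onD)
qed

lemma sd_edge_sp_shift:
  assumes enc: "implements_encoding n k m h l g U" and "k \<le> n"
    and g_pauli: "\<forall>i\<in>{1..n-k}. \<forall>j\<in>{1..<l i}. is_pauli m (g i j)"
    and edge: "sd_edge n k m U M M' L pI"
    and i: "i \<in> {1..n-k}" and j: "j < l i"
  shows "sp m M (gext g l i j) = sp m M' (gext g l i (Suc j))"
proof -
  have cl: "clifford (m + n) U"
    using enc unfolding implements_encoding_def by simp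
  obtain S where S: "is_Zstring (n - k) S"
    and US: "U (tensor m M (tensor (n - k) S L)) = tensor n pI M'"
    using edge unfolding sd_edge_def by blast
  define Z where "Z = (if j = 0 then Zop (i - 1) else pI)"
  let ?X = "tensor m M (tensor (n - k) S L)"
  let ?G = "tensor m (gext g l i j) (tensor (n - k) Z pI)"
  have UG: "U ?G = tensor n (hext h l i (Suc j)) (gext g l i (Suc j))"
    using enc i j unfolding implements_encoding_def Z_def by simp
  have dims: "m + n = m + ((n - k) + k)"
    using \<open>k \<le> n\<close> by simp
  have "is_pauli (m + n) ?X"
    using edge S unfolding sd_edge_def is_Zstring_def dims by (simp add: is_pauli_tensor)
  moreover have "is_pauli (m + n) ?G"
    using g_pauli i unfolding dims gext_def Z_def
    by (auto intro!: is_pauli_tensor is_pauli_Zop)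
  ultimately have "sp (m + n) ?X ?G = sp (m + n) (U ?X) (U ?G)"
    using cl unfolding clifford_def by simp
  \<comment> \<open>Z-type ancilla strings commute, and the physical output of the edge is trivial\<close>
  moreover have "sp (m + n) ?X ?G = sp m M (gext g l i j)"
  proof -
    have "\<forall>i. \<not> fst (Z i)"
      by (simp add: Z_def Zop_def pI_def)
    then show ?thesis
      using S sp_less_2[of m M "gext g l i j"] unfolding is_Zstring_def dims sp_tensor
      by (simp add: sp_Z_type)
  qed
  moreover have "sp (m + n) (U ?X) (U ?G) = sp m M' (gext g l i (Suc j))"
    using sp_tensor[of n m] sp_less_2[of m M' "gext g l i (Suc j)"] unfolding US UG
    by (simp add: add.commute)
  ultimately show ?thesis
    by simp
qed

lemma sd_edge_identity_memory:
  assumes "clifford (m + n) U" "k \<le> n" "sd_edge n k m U pI pI L pI"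
  shows "L = pI"
proof -
  obtain S where S: "is_Zstring (n - k) S" and US: "U (tensor m pI (tensor (n - k) S L)) = pI"
    using assms(3) unfolding sd_edge_def by auto
  have "is_pauli (m + ((n - k) + k)) (tensor m pI (tensor (n - k) S L))"
    using S assms(3) unfolding sd_edge_def is_Zstring_def by (simp add: is_pauli_tensor)
  then have "tensor m pI (tensor (n - k) S L) = pI"
    using clifford_eq_pI_imp_eq_pI[OF assms(1)] US assms(2) by simp
  then show ?thesis
    by (blast dest: tensor_eq_pI_right)
qed

lemma periodic_diagonal_zero:
  fixes a :: "nat \<Rightarrow> nat \<Rightarrow> 'a::zero"
  assumes p: "0 < p" and periodic: "\<And>j. a p j = a 0 j"
    and shift: "\<And>t j. t < p \<Longrightarrow> j < J \<Longrightarrow> a t j = a (Suc t) (Suc j)"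
    and base: "\<And>t. t < p \<Longrightarrow> a t 0 = 0"
  shows "t < p \<Longrightarrow> j \<le> J \<Longrightarrow> a t j = 0"
proof (induction j arbitrary: t)
  case 0
  then show ?case
    using base by simp
next
  case (Suc j)
  then have t: "t < p" and "j < J" by simp_all
  show ?case
  proof (cases t)
    case 0
    have "a 0 (Suc j) = a (Suc (p - 1)) (Suc j)"
      using p periodic by simp
    also have "\<dots> = a (p - 1) j"
      using p \<open>j < J\<close> by (simp add: shift)
    finally show ?thesis
      using 0 Suc.IH p \<open>j < J\<close> by simp
  next
    case (Suc s)
    then show ?thesis
      using shift[of s j] Suc.IH[of s] t \<open>j < J\<close> by simp
  qed
qed

lemma mem_omega_idx:
  "a \<in> set (omega_idx nk l) \<longleftrightarrow> 1 \<le> fst a \<and> fst a \<le> nk \<and> 1 \<le> snd a \<and> snd a < l (fst a)"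
  unfolding omega_idx_def by (cases a) auto

lemma commutes_with_memory_operators_eq_pI:
  assumes full_rank: "Omega_rank n k h l = omega_dim (n - k) l"
    and m_def: "m = omega_dim (n - k) l - Omega_rank n k h l div 2"
    and g_pauli: "\<forall>i\<in>{1..n-k}. \<forall>j\<in>{1..<l i}. is_pauli m (g i j)"
    and g_comm: "\<forall>a\<in>set (omega_idx (n - k) l). \<forall>b\<in>set (omega_idx (n - k) l).
                   of_nat (sp m (g (fst a) (snd a)) (g (fst b) (snd b))) = omega_entry n h l a b"
    and M: "is_pauli m M"
    and comm: "\<And>a. a \<in> set (omega_idx (n - k) l) \<Longrightarrow> sp m M (g (fst a) (snd a)) = 0"
  shows "M = pI"
proof -
  define ix where "ix = omega_idx (n - k) l"
  define D where "D = length ix"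
  define f where "f c = g (fst (ix ! c)) (snd (ix ! c))" for c
  have mem: "ix ! c \<in> set ix" if "c < D" for c
    using that by (simp add: D_def)
  show ?thesis
  proof (rule full_rank_gram_commutant_trivial[of "Omega n k h l" D m f])
    show "Omega n k h l \<in> carrier_mat D D"
      by (simp add: Omega_def Let_def ix_def D_def)
    show "vec_space.rank D (Omega n k h l) = D"
      using full_rank by (simp add: Omega_rank_def omega_dim_def ix_def D_def)
    show "Omega n k h l $$ (b, c) = of_nat (sp m (f b) (f c))" if "b < D" "c < D" for b c
      using that g_comm mem[OF that(1)] mem[OF that(2)]
      by (simp add: Omega_def Let_def ix_def D_def f_def)
    show "is_pauli m (f c)" if "c < D" for c
      using g_pauli mem[OF that] by (auto simp: f_def ix_def mem_omega_idx)
    show "2 * m \<le> D + 1"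
      using m_def full_rank unfolding omega_dim_def ix_def D_def by presburger
    show "sp m M (f c) = 0" if "c < D" for c
      using comm mem[OF that] by (simp add: f_def ix_def)
  qed (rule M)
qed

lemma zero_weight_cycle_memory_commutes:
  assumes enc: "implements_encoding n k m h l g U" and kn: "k \<le> n"
    and g_pauli: "\<forall>i\<in>{1..n-k}. \<forall>j\<in>{1..<l i}. is_pauli m (g i j)"
    and p: "0 < p" "M p = M 0"
    and edges: "\<And>t. t < p \<Longrightarrow> sd_edge n k m U (M t) (M (Suc t)) (L t) pI"
    and t: "t < p" and a: "a \<in> set (omega_idx (n - k) l)"
  shows "sp m (M t) (g (fst a) (snd a)) = 0"
proof -
  obtain i j where ij: "a = (i, j)" "i \<in> {1..n-k}" "1 \<le> j" "j < l i"
    using a unfolding mem_omega_idx by (cases a) auto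
  have "sp m (M t) (gext g l i j) = 0"
  proof (rule periodic_diagonal_zero[where a = "\<lambda>t j. sp m (M t) (gext g l i j)"])
    show "sp m (M t) (gext g l i j) = sp m (M (Suc t)) (gext g l i (Suc j))"
      if "t < p" "j < l i" for t j
      using sd_edge_sp_shift[OF enc kn g_pauli edges] ij(2) that by blast
  qed (use p t ij in \<open>simp_all add: gext_def\<close>)
  then show ?thesis
    using ij by (simp add: gext_def)
qed

theorem theorem3:
  fixes n k m :: nat
    and h g :: "nat \<Rightarrow> nat \<Rightarrow> pauli"
    and l :: "nat \<Rightarrow> nat"
    and U :: "pauli \<Rightarrow> pauli"
  assumes valid: "valid_qcc n k h l"
    and full_rank: "Omega_rank n k h l = omega_dim (n - k) l"
    and m_def: "m = omega_dim (n - k) l - Omega_rank n k h l div 2"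
    and g_pauli: "\<forall>i\<in>{1..n-k}. \<forall>j\<in>{1..<l i}. is_pauli m (g i j)"
    and g_comm: "\<forall>a\<in>set (omega_idx (n - k) l). \<forall>b\<in>set (omega_idx (n - k) l).
                   of_nat (sp m (g (fst a) (snd a)) (g (fst b) (snd b))) = omega_entry n h l a b"
    and enc: "implements_encoding n k m h l g U"
  shows "\<not> catastrophic n k m U"
proof
  assume "catastrophic n k m U"
  then obtain p M L P where p: "0 < p" "M p = M 0"
    and edges: "\<forall>t<p. sd_edge n k m U (M t) (M (Suc t)) (L t) (P t) \<and> weight n (P t) = 0"
    and logical: "\<exists>t<p. weight k (L t) \<noteq> 0"
    unfolding catastrophic_def by blast
  have kn: "k \<le> n"
    using valid by (simp add: valid_qcc_def)
  have clean: "sd_edge n k m U (M t) (M (Suc t)) (L t) pI" if "t < p" for t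
    using edges that weight_eq_0_iff unfolding sd_edge_def by metis
  have memory: "M t = pI" if "t < p" for t
    using clean[OF that] zero_weight_cycle_memory_commutes[OF enc kn g_pauli p clean that]
    by (intro commutes_with_memory_operators_eq_pI[OF full_rank m_def g_pauli g_comm])
      (simp_all add: sd_edge_def)
  obtain t where t: "t < p" "weight k (L t) \<noteq> 0"
    using logical by blast
  have "M (Suc t) = pI"
    using memory t(1) p by (cases "Suc t = p") auto
  then have "L t = pI"
    using clean[OF t(1)] memory[OF t(1)] enc kn
    by (intro sd_edge_identity_memory[of m n U k]) (simp_all add: implements_encoding_def)
  with t(2) show False
    by (simp add: weight_def pI_def)
qed

end
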